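(* Let $n$ and $k$ be integers with $0\le k<n$. If a compact set $X\subset\mathbb R^n$ is $(n-k)$-convex, then $\operatorname{conv}_{k+1}X=\operatorname{conv}X$.
   Context: A compact set $X\subset\mathbb R^n$ is called $m$-convex if for every linear map $A:\mathbb R^n\to\mathbb R^m$ the image $A(X)$ is a convex set. For an integer $m\ge1$, $\operatorname{conv}_m X$ denotes the set of points of $\mathbb R^n$ that can be expressed as a convex combination of at most $m$ points of $X$; $\operatorname{conv}X$ is the usual convex hull. *)

theory Defs
  imports "HOL-Analysis.Analysis"
begin

definition conv_m :: "nat \<Rightarrow> 'a::real_vector set \<Rightarrow> 'a set" where
  "conv_m m X = {y. \<exists>j c u. j \<le> m \<and> (\<forall>i<j. 0 \<le> c i \<and> u i \<in> X) \<and>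
       (\<Sum>i<j. c i) = 1 \<and> y = (\<Sum>i<j. c i *\<^sub>R u i)}"

text \<open>X is m-convex, where m = DIM('b): every linear image of X in 'b (a Euclidean
  space of dimension m, i.e. R^m up to isometry) is convex.\<close>
definition m_convex :: "'b::euclidean_space itself \<Rightarrow> 'a::euclidean_space set \<Rightarrow> bool" where
  "m_convex _ X \<longleftrightarrow> (\<forall>A::'a \<Rightarrow> 'b. linear A \<longrightarrow> convex (A ` X))"

end

theory Submission
  imports Defs
begin

text \<open>Let \<open>Q\<close> be the (compact) set of convex combinations of at most \<open>k + 1\<close> points of \<open>X\<close>.
  Since every linear image of \<open>X\<close> in dimension \<open>n - k\<close> is convex, every flat of dimension at least \<open>k\<close>
  through a point \<open>y\<close> of the convex hull meets \<open>X\<close> (project along the flat).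
  If \<open>y \<notin> Q\<close>, take \<open>q \<in> Q\<close> nearest to \<open>y\<close>, written with positive weights on an affinely
  independent \<open>T \<subseteq> X\<close>. If \<open>card T \<le> k\<close>, the hyperplane through \<open>y\<close> orthogonal to \<open>y - q\<close>
  gives \<open>z \<in> X\<close> such that the segment from \<open>q\<close> to \<open>z\<close> comes closer to \<open>y\<close>. If \<open>card T = k + 1\<close>,
  the flat through \<open>y\<close> parallel to \<open>affine hull T\<close> gives \<open>z \<in> X\<close>, and exchanging one point of \<open>T\<close>
  for \<open>z\<close> moves \<open>q\<close> towards \<open>y\<close>. Either way \<open>q\<close> was not nearest.\<close>

lemma linear_map_kernel_subset:
  fixes V :: "'a::euclidean_space set"
  assumes V: "subspace V" and dim_V: "DIM('a) \<le> dim V + DIM('b)"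
  obtains A :: "'a \<Rightarrow> 'b::euclidean_space" where "linear A" "\<And>u. A u = 0 \<Longrightarrow> u \<in> V"
proof -
  obtain B where B: "B \<subseteq> V\<^sup>\<bottom>" "independent B" "V\<^sup>\<bottom> \<subseteq> span B" "card B = dim (V\<^sup>\<bottom>)"
    using basis_exists by blast
  have "finite B"
    using B(2) finiteI_independent by blast
  have "dim (V\<^sup>\<bottom>) + dim V = DIM('a)"
    using dim_subspace_orthogonal_to_vectors[OF V subspace_UNIV] by (simp add: orthogonal_comp_def)
  then have "card B \<le> card (Basis :: 'b set)"
    using B(4) dim_V by simp
  then obtain g :: "'a \<Rightarrow> 'b" where g: "g ` B \<subseteq> Basis" "inj_on g B"
    using card_le_inj[OF \<open>finite B\<close> finite_Basis] by blast
  define A where "A u = (\<Sum>b\<in>B. (b \<bullet> u) *\<^sub>R g b)" for u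
  have "linear A"
    unfolding A_def
    by (intro linearI)
      (simp_all add: inner_add_right scaleR_add_left sum.distrib scaleR_sum_right inner_scaleR_right)
  have coordinate: "g b \<bullet> A u = b \<bullet> u" if b: "b \<in> B" for b u
  proof -
    have "g b \<bullet> A u = (\<Sum>b'\<in>B. if b' = b then b \<bullet> u else 0)"
      unfolding A_def inner_sum_right
    proof (rule sum.cong[OF refl])
      fix b' assume "b' \<in> B"
      then have "g b' \<in> Basis" "g b \<in> Basis" "g b' = g b \<longleftrightarrow> b' = b"
        using g b by (auto simp: inj_on_eq_iff)
      then show "g b \<bullet> (b' \<bullet> u) *\<^sub>R g b' = (if b' = b then b \<bullet> u else 0)"
        by (auto simp: inner_Basis)
    qed
    also have "\<dots> = b \<bullet> u"
      using b \<open>finite B\<close> by (simp add: sum.delta')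
    finally show ?thesis .
  qed
  show thesis
  proof
    show "linear A" by fact
  next
    fix u assume "A u = 0"
    then have "orthogonal b u" if "b \<in> B" for b
      using coordinate[OF that, of u] by (simp add: orthogonal_def)
    then have "orthogonal w u" if "w \<in> V\<^sup>\<bottom>" for w
      using B(3) that orthogonal_to_span[of w B u] by (auto simp: orthogonal_commute)
    then have "u \<in> V\<^sup>\<bottom>\<^sup>\<bottom>"
      by (simp add: orthogonal_comp_def)
    then show "u \<in> V"
      using orthogonal_comp_self[OF V] by simp
  qed
qed

lemma m_convex_flat_meets:
  fixes X :: "'a::euclidean_space set"
  assumes X: "m_convex TYPE('b::euclidean_space) X" and y: "y \<in> convex hull X"
    and V: "subspace V" and dim_V: "DIM('a) \<le> dim V + DIM('b)"
  obtains z where "z \<in> X" "z - y \<in> V"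
proof -
  obtain A :: "'a \<Rightarrow> 'b" where A: "linear A" "\<And>u. A u = 0 \<Longrightarrow> u \<in> V"
    using linear_map_kernel_subset[OF V dim_V] by blast
  have "A y \<in> convex hull (A ` X)"
    using y convex_hull_linear_image[OF A(1)] by blast
  also have "\<dots> = A ` X"
    using X A(1) by (simp add: m_convex_def convex_hull_eq)
  finally obtain z where "z \<in> X" "A z = A y"
    by auto
  then have "z - y \<in> V"
    using A by (simp add: linear_diff)
  with \<open>z \<in> X\<close> show thesis ..
qed

definition convex_hull_card_le :: "nat \<Rightarrow> 'a::real_vector set \<Rightarrow> 'a set" where
  "convex_hull_card_le m S = {x. \<exists>T. finite T \<and> T \<subseteq> S \<and> card T \<le> m \<and> x \<in> convex hull T}"

lemma conv_m_eq_convex_hull_card_le: "conv_m m S = convex_hull_card_le m S"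
proof
  show "conv_m m S \<subseteq> convex_hull_card_le m S"
  proof
    fix y assume "y \<in> conv_m m S"
    then obtain j c u where j: "j \<le> m" and cu: "\<forall>i<j. 0 \<le> c i \<and> u i \<in> S"
      and c: "(\<Sum>i<j. c i) = 1" and y: "y = (\<Sum>i<j. c i *\<^sub>R u i)"
      by (auto simp: conv_m_def)
    have "y \<in> convex hull (u ` {..<j})"
      unfolding y by (rule convex_sum) (use cu c in \<open>auto intro: hull_inc\<close>)
    moreover have "card (u ` {..<j}) \<le> m"
      using card_image_le[of "{..<j}" u] j by simp
    ultimately show "y \<in> convex_hull_card_le m S"
      using cu by (auto simp: convex_hull_card_le_def)
  qed
next
  show "convex_hull_card_le m S \<subseteq> conv_m m S"
  proof
    fix y assume "y \<in> convex_hull_card_le m S"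
    then obtain T where T: "finite T" "T \<subseteq> S" "card T \<le> m" "y \<in> convex hull T"
      by (auto simp: convex_hull_card_le_def)
    then obtain c where c: "\<forall>x\<in>T. 0 \<le> c x" "sum c T = 1" "(\<Sum>x\<in>T. c x *\<^sub>R x) = y"
      by (auto simp: convex_hull_finite)
    obtain h where h: "bij_betw h {..<card T} T"
      using bij_betw_from_nat_into_finite[OF T(1)] by blast
    have "(\<Sum>i<card T. c (h i)) = 1" "(\<Sum>i<card T. c (h i) *\<^sub>R h i) = y"
      using sum.reindex_bij_betw[OF h, of c] sum.reindex_bij_betw[OF h, of "\<lambda>x. c x *\<^sub>R x"] c
      by simp_all
    moreover have "\<forall>i<card T. 0 \<le> c (h i) \<and> h i \<in> S"
      using h c(1) T(2) by (auto simp: bij_betw_def)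
    ultimately show "y \<in> conv_m m S"
      unfolding conv_m_def mem_Collect_eq
      by (intro exI[of _ "card T"] exI[of _ "\<lambda>i. c (h i)"] exI[of _ h]) (use T(3) in auto)
  qed
qed

lemma convex_hull_card_le_0 [simp]: "convex_hull_card_le 0 S = {}"
  by (auto simp: convex_hull_card_le_def card_0_eq)

lemma convex_hull_card_le_1 [simp]: "convex_hull_card_le 1 S = S"
proof
  show "convex_hull_card_le 1 S \<subseteq> S"
  proof
    fix x assume "x \<in> convex_hull_card_le 1 S"
    then obtain T where T: "finite T" "T \<subseteq> S" "card T \<le> 1" "x \<in> convex hull T"
      by (auto simp: convex_hull_card_le_def)
    have "T \<noteq> {}"
      using T(4) by auto
    then have "card T = 1"
      using T(1,3) card_gt_0_iff[of T] by linarith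
    then obtain a where "T = {a}"
      by (rule card_1_singletonE)
    with T(2,4) show "x \<in> S" by simp
  qed
  show "S \<subseteq> convex_hull_card_le 1 S"
    unfolding convex_hull_card_le_def by (force intro!: exI[of _ "{x}" for x])
qed

lemma convex_hull_card_le_mono: "m \<le> n \<Longrightarrow> convex_hull_card_le m S \<subseteq> convex_hull_card_le n S"
  by (force simp: convex_hull_card_le_def)

lemma segment_mem_convex_hull_card_le_Suc:
  assumes "x \<in> S" "y \<in> convex_hull_card_le m S" "0 \<le> u" "u \<le> 1"
  shows "(1 - u) *\<^sub>R x + u *\<^sub>R y \<in> convex_hull_card_le (Suc m) S"
proof -
  obtain T where T: "finite T" "T \<subseteq> S" "card T \<le> m" "y \<in> convex hull T"
    using assms(2) by (auto simp: convex_hull_card_le_def)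
  have "(1 - u) *\<^sub>R x + u *\<^sub>R y \<in> convex hull (insert x T)"
    using assms(3,4) T(4) hull_mono[of T "insert x T"]
    by (intro convexD_alt convex_convex_hull) (auto intro: hull_inc)
  then show ?thesis
    using T assms(1) unfolding convex_hull_card_le_def
    by (intro CollectI exI[of _ "insert x T"]) (auto simp: card_insert_if)
qed

lemma convex_hull_card_le_Suc:
  assumes "m \<noteq> 0"
  shows "convex_hull_card_le (Suc m) S =
    {(1 - u) *\<^sub>R x + u *\<^sub>R y | x y u. 0 \<le> u \<and> u \<le> 1 \<and> x \<in> S \<and> y \<in> convex_hull_card_le m S}"
    (is "?lhs = ?rhs")
proof
  show "?lhs \<subseteq> ?rhs"
  proof
    fix w assume "w \<in> ?lhs"
    then obtain T where T: "finite T" "T \<subseteq> S" "card T \<le> Suc m" "w \<in> convex hull T"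
      by (auto simp: convex_hull_card_le_def)
    then obtain a where a: "a \<in> T"
      by fastforce
    define U where "U = T - {a}"
    have T_eq: "T = insert a U" and U: "finite U" "U \<subseteq> S" "card U \<le> m"
      using T a by (auto simp: U_def)
    show "w \<in> ?rhs"
    proof (cases "U = {}")
      case True
      have "a \<in> convex_hull_card_le m S"
        using convex_hull_card_le_mono[of 1 m S] assms T(2) a
        unfolding convex_hull_card_le_1 by auto
      moreover have "w = a"
        using T(4) True unfolding T_eq by simp
      ultimately show ?thesis
        using T(2) a by (intro CollectI exI[of _ a] exI[of _ a] exI[of _ 1]) auto
    next
      case False
      then obtain v b where v: "0 \<le> v" "v \<le> 1" and b: "b \<in> convex hull U"
          and w: "w = (1 - v) *\<^sub>R a + v *\<^sub>R b"
        using T(4) unfolding T_eq convex_hull_insert[OF False]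
        by (smt (verit, del_insts) mem_Collect_eq)
      have "b \<in> convex_hull_card_le m S"
        using U b by (auto simp: convex_hull_card_le_def)
      then show ?thesis
        using T(2) a v w by blast
    qed
  qed
next
  show "?rhs \<subseteq> ?lhs"
    using segment_mem_convex_hull_card_le_Suc by blast
qed

lemma compact_convex_hull_card_le:
  fixes S :: "'a::real_normed_vector set"
  assumes "compact S"
  shows "compact (convex_hull_card_le m S)"
proof (cases "m = 0")
  case False
  then have "m > 0" by simp
  then show ?thesis
  proof (induction m rule: nat_induct_non_zero)
    case 1
    show ?case
      using assms by (simp only: convex_hull_card_le_1)
  next
    case (Suc m)
    then show ?case
      by (simp add: assms convex_hull_card_le_Suc compact_convex_combinations)
  qed
qed simp

lemma convex_weights_pos_if_minimal:
  fixes T :: "'a::real_vector set"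
  assumes T: "finite T" and minimal: "\<And>x. x \<in> T \<Longrightarrow> q \<notin> convex hull (T - {x})"
    and c: "\<forall>x\<in>T. 0 \<le> c x" "sum c T = 1" "(\<Sum>x\<in>T. c x *\<^sub>R x) = q"
    and x: "x \<in> T"
  shows "0 < c x"
proof (rule ccontr)
  assume "\<not> 0 < c x"
  then have "c x = 0"
    using c(1) x by force
  then have "sum c (T - {x}) = 1" "(\<Sum>x\<in>T - {x}. c x *\<^sub>R x) = q"
    using c(2,3) sum.remove[OF T x, of c] sum.remove[OF T x, of "\<lambda>x. c x *\<^sub>R x"] by simp_all
  then have "q \<in> convex hull (T - {x})"
    using c(1) T by (auto simp: convex_hull_finite intro!: exI[of _ c])
  with minimal[OF x] show False ..
qed

lemma max_scaling_below_weights: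
  fixes c d :: "'a \<Rightarrow> real"
  assumes T: "finite T" and c: "\<And>x. x \<in> T \<Longrightarrow> 0 < c x" and d: "sum d T = 1"
  obtains x0 \<alpha> where "x0 \<in> T" "0 < \<alpha>" "\<alpha> * d x0 = c x0" "\<And>x. x \<in> T \<Longrightarrow> \<alpha> * d x \<le> c x"
proof -
  define D where "D = {x\<in>T. 0 < d x}"
  have "D \<noteq> {}"
  proof
    assume "D = {}"
    then have "sum d T \<le> 0"
      by (intro sum_nonpos) (auto simp: D_def)
    with d show False by simp
  qed
  moreover have "finite D"
    using T by (simp add: D_def)
  ultimately obtain x0 where x0: "x0 \<in> D" and x0_min: "\<And>x. x \<in> D \<Longrightarrow> c x0 / d x0 \<le> c x / d x"
    using ex_is_arg_min_if_finite[of D "\<lambda>x. c x / d x"] by (auto simp: is_arg_min_linorder)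
  have "x0 \<in> T" "0 < d x0"
    using x0 by (auto simp: D_def)
  define \<alpha> where "\<alpha> = c x0 / d x0"
  have "0 < \<alpha>"
    using c[OF \<open>x0 \<in> T\<close>] \<open>0 < d x0\<close> by (simp add: \<alpha>_def)
  have "\<alpha> * d x \<le> c x" if "x \<in> T" for x
  proof (cases "0 < d x")
    case True
    then have "\<alpha> \<le> c x / d x"
      using x0_min[of x] that by (simp add: D_def \<alpha>_def)
    with True show ?thesis
      by (simp add: le_divide_eq mult.commute)
  next
    case False
    then have "\<alpha> * d x \<le> 0"
      using \<open>0 < \<alpha>\<close> by (simp add: mult_nonneg_nonpos)
    then show ?thesis
      using c[OF that] by simp
  qed
  moreover have "\<alpha> * d x0 = c x0"
    using \<open>0 < d x0\<close> by (simp add: \<alpha>_def)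
  ultimately show thesis
    using that \<open>x0 \<in> T\<close> \<open>0 < \<alpha>\<close> by blast
qed

lemma convex_hull_exchange_towards:
  fixes T :: "'a::real_vector set"
  assumes T: "finite T" and c: "\<And>x. x \<in> T \<Longrightarrow> 0 < c x" "sum c T = 1"
    and p: "p \<in> affine hull T"
  obtains x0 \<alpha> where "x0 \<in> T" "0 < \<alpha>" "\<alpha> \<le> 1"
    "(\<Sum>x\<in>T. c x *\<^sub>R x) + \<alpha> *\<^sub>R (z - p) \<in> convex hull (insert z (T - {x0}))"
proof -
  obtain d where d: "sum d T = 1" "(\<Sum>x\<in>T. d x *\<^sub>R x) = p"
    using p by (auto simp: affine_hull_finite[OF T])
  obtain x0 \<alpha> where "x0 \<in> T" "0 < \<alpha>" and "\<alpha> * d x0 = c x0"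
    and below: "\<And>x. x \<in> T \<Longrightarrow> \<alpha> * d x \<le> c x"
    using max_scaling_below_weights[where c = c and d = d, OF T c(1) d(1)] by blast
  define \<beta> where "\<beta> x = c x - \<alpha> * d x" for x
  have "\<beta> x0 = 0" "\<And>x. x \<in> T \<Longrightarrow> 0 \<le> \<beta> x"
    using \<open>\<alpha> * d x0 = c x0\<close> below by (simp_all add: \<beta>_def)
  have sum_\<beta>: "sum \<beta> T = 1 - \<alpha>"
    using c(2) d(1) by (simp add: \<beta>_def sum_subtractf flip: sum_distrib_left)
  then have "\<alpha> \<le> 1"
    using sum_nonneg[of T \<beta>, OF \<open>\<And>x. x \<in> T \<Longrightarrow> 0 \<le> \<beta> x\<close>] by linarith
  \<comment> \<open>the weight \<open>\<alpha>\<close> freed at \<open>x0\<close> is handed over to \<open>z\<close>\<close>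
  define \<mu> where "\<mu> = \<beta>(x0 := \<alpha>)"
  define v where "v = id(x0 := z)"
  have "(\<Sum>x\<in>T. \<beta> x *\<^sub>R x) = (\<Sum>x\<in>T. c x *\<^sub>R x) - \<alpha> *\<^sub>R p"
    by (simp add: \<beta>_def scaleR_diff_left sum_subtractf scaleR_sum_right flip: d(2))
  then have "(\<Sum>x\<in>T. c x *\<^sub>R x) + \<alpha> *\<^sub>R (z - p) = \<alpha> *\<^sub>R z + (\<Sum>x\<in>T. \<beta> x *\<^sub>R x)"
    by (simp add: algebra_simps)
  also have "\<dots> = (\<Sum>x\<in>T. \<mu> x *\<^sub>R v x)"
    using sum.remove[OF T \<open>x0 \<in> T\<close>, of "\<lambda>x. \<mu> x *\<^sub>R v x"]
      sum.remove[OF T \<open>x0 \<in> T\<close>, of "\<lambda>x. \<beta> x *\<^sub>R x"] \<open>\<beta> x0 = 0\<close>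
    by (simp add: \<mu>_def v_def)
  also have "\<dots> \<in> convex hull (insert z (T - {x0}))"
  proof (rule convex_sum[OF T convex_convex_hull])
    show "sum \<mu> T = 1"
      using sum.remove[OF T \<open>x0 \<in> T\<close>, of \<mu>] sum.remove[OF T \<open>x0 \<in> T\<close>, of \<beta>] sum_\<beta> \<open>\<beta> x0 = 0\<close>
      by (simp add: \<mu>_def)
    show "\<And>x. x \<in> T \<Longrightarrow> 0 \<le> \<mu> x"
      using \<open>\<And>x. x \<in> T \<Longrightarrow> 0 \<le> \<beta> x\<close> \<open>0 < \<alpha>\<close> by (simp add: \<mu>_def)
    show "\<And>x. x \<in> T \<Longrightarrow> v x \<in> convex hull (insert z (T - {x0}))"
      by (auto simp: v_def intro: hull_inc)
  qed
  finally show thesis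
    using that \<open>x0 \<in> T\<close> \<open>0 < \<alpha>\<close> \<open>\<alpha> \<le> 1\<close> by blast
qed

lemma convex_hull_minimal_support:
  fixes T0 :: "'a::euclidean_space set"
  assumes "finite T0" "q \<in> convex hull T0"
  obtains T c where "T \<subseteq> T0" "q \<in> convex hull T" "card T \<le> aff_dim T + 1"
    "\<And>x. x \<in> T \<Longrightarrow> 0 < c x" "sum c T = 1" "(\<Sum>x\<in>T. c x *\<^sub>R x) = q"
proof -
  obtain T where T: "T \<subseteq> T0" "q \<in> convex hull T"
    and T_min: "\<And>U. U \<subseteq> T0 \<Longrightarrow> q \<in> convex hull U \<Longrightarrow> card T \<le> card U"
    using ex_has_least_nat[of "\<lambda>T. T \<subseteq> T0 \<and> q \<in> convex hull T" T0 card] assms(2)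
    by (metis (no_types, lifting) order_refl)
  have "finite T"
    using T(1) assms(1) finite_subset by blast
  obtain c where c: "\<forall>x\<in>T. 0 \<le> c x" "sum c T = 1" "(\<Sum>x\<in>T. c x *\<^sub>R x) = q"
    using T(2) \<open>finite T\<close> by (auto simp: convex_hull_finite)
  have "q \<notin> convex hull (T - {x})" if "x \<in> T" for x
    using T_min[of "T - {x}"] T(1) that card_Diff1_less[OF \<open>finite T\<close> that] by auto
  then have "\<And>x. x \<in> T \<Longrightarrow> 0 < c x"
    using convex_weights_pos_if_minimal[OF \<open>finite T\<close> _ c] by blast
  moreover have "card T \<le> aff_dim T + 1"
  proof -
    obtain S where S: "S \<subseteq> T" "card S \<le> aff_dim T + 1" "q \<in> convex hull S"
      using T(2) unfolding caratheodory_aff_dim[of T] by blast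
    then have "card T \<le> card S"
      using T_min[of S] T(1) by blast
    with S(2) show ?thesis
      by linarith
  qed
  ultimately show thesis
    using that T c(2,3) by blast
qed

lemma m_convex_closer_point_insert:
  fixes X :: "'a::euclidean_space set"
  assumes X: "m_convex TYPE('b::euclidean_space) X" and y: "y \<in> convex hull X"
    and q: "q \<in> convex hull T" "y \<noteq> q"
  obtains z w where "z \<in> X" "w \<in> convex hull (insert z T)" "dist y w < dist y q"
proof -
  have "dim {v. (y - q) \<bullet> v = 0} = DIM('a) - 1"
    using dim_hyperplane[of "y - q"] q(2) by simp
  then have "DIM('a) \<le> dim {v. (y - q) \<bullet> v = 0} + DIM('b)"
    using DIM_positive[where 'a = 'b] by linarith
  then obtain z where "z \<in> X" and z: "(y - q) \<bullet> (z - y) = 0"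
    using m_convex_flat_meets[OF X y subspace_hyperplane] by blast
  have "(y - q) \<bullet> (z - q) = (y - q) \<bullet> (z - y) + (y - q) \<bullet> (y - q)"
    by (simp add: algebra_simps)
  then have "0 < (y - q) \<bullet> (z - q)"
    using z q(2) by simp
  then obtain u where "0 < u" "u \<le> 1" and closer: "dist (q + u *\<^sub>R (z - q)) y < dist q y"
    using closer_point_lemma by blast
  have "q + u *\<^sub>R (z - q) = (1 - u) *\<^sub>R q + u *\<^sub>R z"
    by (simp add: algebra_simps)
  also have "\<dots> \<in> convex hull (insert z T)"
    using q(1) hull_mono[of T "insert z T"] \<open>0 < u\<close> \<open>u \<le> 1\<close>
    by (intro convexD_alt convex_convex_hull) (auto intro: hull_inc)
  finally show thesis
    using that \<open>z \<in> X\<close> closer by (simp add: dist_commute)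
qed

lemma m_convex_closer_point_exchange:
  fixes X :: "'a::euclidean_space set"
  assumes X: "m_convex TYPE('b::euclidean_space) X" and y: "y \<in> convex hull X"
    and T: "finite T" "int DIM('a) \<le> aff_dim T + DIM('b)"
    and c: "\<And>x. x \<in> T \<Longrightarrow> 0 < c x" "sum c T = 1" "(\<Sum>x\<in>T. c x *\<^sub>R x) = q"
    and "y \<noteq> q"
  obtains z x0 w where "z \<in> X" "x0 \<in> T" "w \<in> convex hull (insert z (T - {x0}))"
    "dist y w < dist y q"
proof -
  have "q \<in> convex hull T"
    unfolding convex_hull_finite[OF T(1)] using c by (auto intro!: exI[of _ c] less_imp_le)
  then have "q \<in> affine hull T"
    using convex_hull_subset_affine_hull by blast
  define V where "V = span ((+) (- q) ` T)"
  have "DIM('a) \<le> dim V + DIM('b)"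
    using T(2) aff_dim_eq_dim[OF \<open>q \<in> affine hull T\<close>] by (simp add: V_def dim_span)
  then obtain z where "z \<in> X" "z - y \<in> V"
    using m_convex_flat_meets[OF X y subspace_span] V_def by blast
  then have "q + (z - y) \<in> affine hull T"
    unfolding affine_hull_span_gen[OF \<open>q \<in> affine hull T\<close>] V_def by blast
  then obtain x0 \<alpha> where "x0 \<in> T" "0 < \<alpha>" "\<alpha> \<le> 1"
    and w: "q + \<alpha> *\<^sub>R (y - q) \<in> convex hull (insert z (T - {x0}))"
    using convex_hull_exchange_towards[OF T(1) c(1,2), of _ z] c(3) by force
  have "y - (q + \<alpha> *\<^sub>R (y - q)) = (1 - \<alpha>) *\<^sub>R (y - q)"
    by (simp add: algebra_simps)
  then have "dist y (q + \<alpha> *\<^sub>R (y - q)) = (1 - \<alpha>) * dist y q"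
    using \<open>\<alpha> \<le> 1\<close> by (simp add: dist_norm)
  also have "\<dots> < dist y q"
    using \<open>0 < \<alpha>\<close> \<open>y \<noteq> q\<close> by simp
  finally show thesis
    using that \<open>z \<in> X\<close> \<open>x0 \<in> T\<close> w by blast
qed

lemma m_convex_closer_point_card_le:
  fixes X :: "'a::euclidean_space set"
  assumes k: "k < DIM('a)" and dim_b: "DIM('b::euclidean_space) = DIM('a) - k"
    and X: "m_convex TYPE('b) X" and y: "y \<in> convex hull X"
    and q: "q \<in> convex_hull_card_le (Suc k) X" "y \<noteq> q"
  obtains w where "w \<in> convex_hull_card_le (Suc k) X" "dist y w < dist y q"
proof -
  have in_Q: "w \<in> convex_hull_card_le (Suc k) X"
    if "finite S" "S \<subseteq> X" "card S \<le> Suc k" "w \<in> convex hull S" for S w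
    using that by (auto simp: convex_hull_card_le_def)
  obtain T0 where T0: "finite T0" "T0 \<subseteq> X" "card T0 \<le> Suc k" "q \<in> convex hull T0"
    using q(1) unfolding convex_hull_card_le_def by blast
  obtain T c where T: "T \<subseteq> T0" "q \<in> convex hull T" "card T \<le> aff_dim T + 1"
    and c: "\<And>x. x \<in> T \<Longrightarrow> 0 < c x" "sum c T = 1" "(\<Sum>x\<in>T. c x *\<^sub>R x) = q"
    using convex_hull_minimal_support[OF T0(1,4)] by blast
  have "finite T" "T \<subseteq> X" "card T \<le> Suc k"
    using T(1) T0 card_mono[OF T0(1) T(1)] finite_subset by auto
  show thesis
  proof (cases "card T \<le> k")
    case True
    obtain z w where "z \<in> X" "w \<in> convex hull (insert z T)" "dist y w < dist y q"
      using m_convex_closer_point_insert[OF X y T(2) q(2)] .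
    moreover have "card (insert z T) \<le> Suc k"
      using True \<open>finite T\<close> by (simp add: card_insert_if)
    ultimately show thesis
      using that in_Q[of "insert z T" w] \<open>finite T\<close> \<open>T \<subseteq> X\<close> by blast
  next
    case False
    then have "int DIM('a) \<le> aff_dim T + DIM('b)"
      using T(3) \<open>card T \<le> Suc k\<close> dim_b k by linarith
    then obtain z x0 w where "z \<in> X" "x0 \<in> T" "w \<in> convex hull (insert z (T - {x0}))"
        "dist y w < dist y q"
      using m_convex_closer_point_exchange[OF X y \<open>finite T\<close> _ c q(2)] by blast
    moreover have "card (insert z (T - {x0})) \<le> Suc k"
      using \<open>card T \<le> Suc k\<close> \<open>finite T\<close> \<open>x0 \<in> T\<close> by (auto simp: card_insert_if)
    ultimately show thesis
      using that in_Q[of "insert z (T - {x0})" w] \<open>finite T\<close> \<open>T \<subseteq> X\<close> by blast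
  qed
qed

lemma convex_hull_subset_convex_hull_card_le:
  fixes X :: "'a::euclidean_space set"
  assumes k: "k < DIM('a)" and dim_b: "DIM('b::euclidean_space) = DIM('a) - k"
    and "compact X" and X: "m_convex TYPE('b) X"
  shows "convex hull X \<subseteq> convex_hull_card_le (Suc k) X"
proof
  fix y assume y: "y \<in> convex hull X"
  define Q where "Q = convex_hull_card_le (Suc k) X"
  have "X \<subseteq> Q"
    using convex_hull_card_le_mono[of 1 "Suc k" X] unfolding Q_def convex_hull_card_le_1 by simp
  with y have "Q \<noteq> {}"
    by auto
  moreover have "closed Q"
    unfolding Q_def by (intro compact_imp_closed compact_convex_hull_card_le) fact
  ultimately obtain q where "q \<in> Q" and q_nearest: "\<And>w. w \<in> Q \<Longrightarrow> dist y q \<le> dist y w"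
    using distance_attains_inf by blast
  show "y \<in> Q"
  proof (rule ccontr)
    assume "y \<notin> Q"
    with \<open>q \<in> Q\<close> have "y \<noteq> q"
      by blast
    then obtain w where "w \<in> Q" "dist y w < dist y q"
      using m_convex_closer_point_card_le[OF k dim_b X y] \<open>q \<in> Q\<close> unfolding Q_def by blast
    with q_nearest show False
      by fastforce
  qed
qed

theorem corollary2p4:
  fixes X :: "'a::euclidean_space set" and k :: nat
  assumes "k < DIM('a)"
    and "DIM('b::euclidean_space) = DIM('a) - k"
    and "compact X"
    and "m_convex TYPE('b) X"
  shows "conv_m (k + 1) X = convex hull X"
proof
  show "conv_m (k + 1) X \<subseteq> convex hull X"
    by (auto simp: conv_m_eq_convex_hull_card_le convex_hull_card_le_def
        dest: hull_mono[THEN subsetD, rotated])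
  show "convex hull X \<subseteq> conv_m (k + 1) X"
    using convex_hull_subset_convex_hull_card_le[OF assms] by (simp add: conv_m_eq_convex_hull_card_le)
qed

end
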